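(* Let $L$ be a distributive lattice. The relation $\le$ on positive simple functions over $L$ is transitive: if $\sum_ir_ia_i\le\sum_js_jb_j$ and $\sum_js_jb_j\le\sum_kt_kc_k$, then $\sum_ir_ia_i\le\sum_kt_kc_k$.
   Context: A positive simple function over a distributive lattice $L$ is a formal finite sum $\sum_i r_ix_i$ with rationals $r_i\ge0$ and $x_i\in L$. For a finite index set $I$, $x_I:=\bigwedge_{i\in I}x_i$ ($x_\emptyset=1$) and $r_I:=\sum_{i\in I}r_i$ ($r_\emptyset=0$). Define $\sum_ir_ix_i\le\sum_js_jy_j$ iff for every finite index set $I$, $x_I\le\bigvee\{y_J: J\text{ a finite index set with } r_I\le s_J\}$. *)

theory Defs
  imports Main "HOL.Rat"
begin

text \<open>A positive simple function over a lattice 'a is represented as a finite list of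
  coefficient/element pairs (r_i, x_i); its index set is {..<length f}.\<close>

type_synonym 'a psf = "(rat \<times> 'a) list"

definition psf_pos :: "'a psf \<Rightarrow> bool" where
  "psf_pos f \<longleftrightarrow> (\<forall>p \<in> set f. fst p \<ge> 0)"

definition psf_coeff :: "'a psf \<Rightarrow> nat set \<Rightarrow> rat" where
  "psf_coeff f I = (\<Sum>i\<in>I. fst (f ! i))"

definition psf_meet :: "('a::bounded_lattice) psf \<Rightarrow> nat set \<Rightarrow> 'a" where
  "psf_meet f I = Finite_Set.fold inf top ((\<lambda>i. snd (f ! i)) ` I)"

definition fjoin :: "('a::bounded_lattice) set \<Rightarrow> 'a" where
  "fjoin S = Finite_Set.fold sup bot S"

definition psf_le :: "('a::{bounded_lattice,distrib_lattice}) psf \<Rightarrow> 'a psf \<Rightarrow> bool" where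
  "psf_le f g \<longleftrightarrow>
     (\<forall>I. I \<subseteq> {..<length f} \<longrightarrow>
        psf_meet f I \<le>
          fjoin {psf_meet g J | J. J \<subseteq> {..<length g} \<and> psf_coeff f I \<le> psf_coeff g J})"

end

theory Submission
  imports Defs
begin

text \<open>
  For a simple function g and a
  rational threshold r, let the threshold set of g at r be the set of meets y_J over all
  index sets J with r \<le> s_J.  Then f \<le> g says exactly that every meet x_I of f lies below
  the join of the threshold set of g at r_I.  Raising the threshold shrinks the threshold
  set, so its join is antitone in r.  The key lemma states that g \<le> h implies that, for
  every threshold r, the join of the threshold set of g at r lies below that of h at r:
  each y_J with r \<le> s_J lies below the join of h's threshold set at s_J, which is below
  the one at r.  Transitivity follows by chaining this with the hypothesis f \<le> g.
\<close>

lemma fjoin_insert: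
  fixes S :: "'a::bounded_lattice set"
  assumes "finite S"
  shows "fjoin (insert x S) = sup x (fjoin S)"
proof -
  interpret comp_fun_idem "sup :: 'a \<Rightarrow> 'a \<Rightarrow> 'a" by (fact comp_fun_idem_sup)
  show ?thesis unfolding fjoin_def using assms by (simp add: fold_insert_idem)
qed

lemma fjoin_upper:
  fixes S :: "'a::bounded_lattice set"
  assumes "finite S" and "x \<in> S"
  shows "x \<le> fjoin S"
  using assms by (induction S rule: finite_induct) (auto simp: fjoin_insert intro: le_supI2)

lemma fjoin_least:
  fixes S :: "'a::bounded_lattice set"
  assumes "finite S" and "\<And>x. x \<in> S \<Longrightarrow> x \<le> y"
  shows "fjoin S \<le> y"
  using assms
proof (induction S rule: finite_induct)
  case empty
  show ?case by (simp add: fjoin_def)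
next
  case (insert x F)
  then show ?case by (simp add: fjoin_insert)
qed

definition psf_above :: "('a::bounded_lattice) psf \<Rightarrow> rat \<Rightarrow> 'a set" where
  "psf_above g r = {psf_meet g J | J. J \<subseteq> {..<length g} \<and> r \<le> psf_coeff g J}"

lemma finite_psf_above: "finite (psf_above g r)"
proof (rule finite_subset)
  show "psf_above g r \<subseteq> psf_meet g ` Pow {..<length g}"
    unfolding psf_above_def by auto
qed simp

lemma psf_le_iff_above:
  "psf_le f g \<longleftrightarrow>
     (\<forall>I. I \<subseteq> {..<length f} \<longrightarrow> psf_meet f I \<le> fjoin (psf_above g (psf_coeff f I)))"
  unfolding psf_le_def psf_above_def ..

lemma fjoin_psf_above_antitone:
  assumes "r \<le> r'"
  shows "fjoin (psf_above g r') \<le> fjoin (psf_above g r)"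
proof (rule fjoin_least[OF finite_psf_above])
  fix y assume "y \<in> psf_above g r'"
  with assms have "y \<in> psf_above g r"
    unfolding psf_above_def by (auto intro: order_trans)
  then show "y \<le> fjoin (psf_above g r)"
    by (rule fjoin_upper[OF finite_psf_above])
qed

lemma psf_le_fjoin_above:
  assumes "psf_le g h"
  shows "fjoin (psf_above g r) \<le> fjoin (psf_above h r)"
proof (rule fjoin_least[OF finite_psf_above])
  fix y assume "y \<in> psf_above g r"
  then obtain J where J: "J \<subseteq> {..<length g}" "r \<le> psf_coeff g J" and y: "y = psf_meet g J"
    unfolding psf_above_def by blast
  have "y \<le> fjoin (psf_above h (psf_coeff g J))"
    using assms J(1) unfolding y psf_le_iff_above by blast
  also have "\<dots> \<le> fjoin (psf_above h r)"
    using J(2) by (rule fjoin_psf_above_antitone)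
  finally show "y \<le> fjoin (psf_above h r)" .
qed

theorem lemma4p4:
  fixes a b c :: "('a::{bounded_lattice,distrib_lattice}) psf"
  assumes "psf_pos a" and "psf_pos b" and "psf_pos c"
    and "psf_le a b" and "psf_le b c"
  shows "psf_le a c"
  unfolding psf_le_iff_above
proof (intro allI impI)
  fix I assume I: "I \<subseteq> {..<length a}"
  have "psf_meet a I \<le> fjoin (psf_above b (psf_coeff a I))"
    using assms(4) I unfolding psf_le_iff_above by blast
  also have "\<dots> \<le> fjoin (psf_above c (psf_coeff a I))"
    using assms(5) by (rule psf_le_fjoin_above)
  finally show "psf_meet a I \<le> fjoin (psf_above c (psf_coeff a I))" .
qed

end
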